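(* Let $!\Gamma$ be a nonempty finite multiset of ILL formulae each of the form $!\gamma$, $\psi$ an ILL formula, $\mathcal{B}$ a base and $L,K$ atomic multisets. If $\Vdash^L_{\mathcal{B}}!\Gamma$ and $!\Gamma\Vdash^K_{\mathcal{B}}\psi$, then $\Vdash^{L,K}_{\mathcal{B}}\psi$.
   Context: Fix a set $\mathbb{A}$ of propositional atoms. ILL formulae: $\phi ::= p\in\mathbb{A} \mid \top \mid 0 \mid 1 \mid \phi\multimap\phi \mid \phi\otimes\phi \mid \phi\,\&\,\phi \mid \phi\oplus\phi \mid\ !\phi$. All multisets are finite; "$\Gamma,\Delta$" denotes multiset union. Atomic rules and bases: an atomic sequent is $P\Rightarrow p$ with $P$ a multiset of atoms, $p$ an atom. An atomic box is a multiset of atomic sequents. An atomic rule is a triple $\langle\mathbf{A},\mathbf{S},p\rangle$ with $\mathbf{A}$ a multiset of atomic boxes, $\mathbf{S}$ an atomic box, $p$ an atom. A base is a set of atomic rules. An atom $p$ is persistent in $\mathcal{B}$ if some $\langle\varnothing,\mathbf{S},p\rangle\in\mathcal{B}$ has $\mathbf{S}\neq\varnothing$. Derivability $\vdash_{\mathcal{B}}$: (Ref) $p\vdash_{\mathcal{B}}p$; (App) if $\langle\mathbf{A},\mathbf{S},p\rangle\in\mathcal{B}$ with $\mathbf{A}=\{\mathbf{T}_1,\dots,\mathbf{T}_m\}$, and there are atomic multisets $C_1,\dots,C_n$ ($n\ge m$) and a multiset $D=\{d_{m+1},\dots,d_n\}$ of atoms persistent in $\mathcal{B}$ such that $C_i,Q\vdash_{\mathcal{B}}q$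 for every $i\le m$ and every $Q\Rightarrow q\in\mathbf{T}_i$, $C_j\vdash_{\mathcal{B}}d_j$ for every $m<j\le n$, and $D,U\vdash_{\mathcal{B}}v$ for every $U\Rightarrow v\in\mathbf{S}$, then $C_1,\dots,C_n\vdash_{\mathcal{B}}p$. Support $\Vdash^L_{\mathcal{B}}$ (base $\mathcal{B}$, atomic multiset $L$), by induction on formulae: $\Vdash^L_{\mathcal{B}}p$ iff $L\vdash_{\mathcal{B}}p$; $\Vdash^L_{\mathcal{B}}\varphi\multimap\psi$ iff $\varphi\Vdash^L_{\mathcal{B}}\psi$; $\Vdash^L_{\mathcal{B}}\varphi\otimes\psi$ iff for all $\mathcal{C}\supseteq\mathcal{B}$, atomic $K$, atoms $p$: if $\varphi,\psi\Vdash^K_{\mathcal{C}}p$ then $\Vdash^{L,K}_{\mathcal{C}}p$; $\Vdash^L_{\mathcal{B}}1$ iff for all $\mathcal{C}\supseteq\mathcal{B}$, $K$, $p$: if $\Vdash^K_{\mathcal{C}}p$ then $\Vdash^{L,K}_{\mathcal{C}}p$; $\Vdash^L_{\mathcal{B}}\varphi\&\psi$ iff $\Vdash^L_{\mathcal{B}}\varphi$ and $\Vdash^L_{\mathcal{B}}\psi$; $\Vdash^L_{\mathcal{B}}\varphi\oplus\psi$ iff for all $\mathcal{C}\supseteq\mathcal{B}$, $K$, $p$: if $\varphi\Vdash^K_{\mathcal{C}}p$ and $\psi\Vdash^K_{\mathcal{C}}p$ then $\Vdash^{L,K}_{\mathcal{C}}p$; $\Vdash^L_{\mathcal{B}}0$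 iff $\Vdash^{L,K}_{\mathcal{B}}p$ for all atoms $p$ and atomic $K$; $\Vdash^L_{\mathcal{B}}\top$ always; $\Vdash^L_{\mathcal{B}}!\varphi$ iff for all $\mathcal{C}\supseteq\mathcal{B}$, $K$, $p$: if (for all $\mathcal{D}\supseteq\mathcal{C}$, $\Vdash^{\varnothing}_{\mathcal{D}}\varphi$ implies $\Vdash^K_{\mathcal{D}}p$) then $\Vdash^{L,K}_{\mathcal{C}}p$. For nonempty multisets: $\Vdash^L_{\mathcal{B}}\Gamma,\Delta$ iff $L=K,M$ with $\Vdash^K_{\mathcal{B}}\Gamma$ and $\Vdash^M_{\mathcal{B}}\Delta$. For a nonempty antecedent written $!\Delta,\Theta$, where $!\Delta$ collects the formulae with top-level connective $!$ (with $\Delta$ the formulae under those $!$) and $\Theta$ contains none: $!\Delta,\Theta\Vdash^L_{\mathcal{B}}\varphi$ iff for all $\mathcal{C}\supseteq\mathcal{B}$ and atomic $K$, if $\Vdash^{\varnothing}_{\mathcal{C}}\delta$ for every $\delta\in\Delta$ and $\Vdash^K_{\mathcal{C}}\Theta$ then $\Vdash^{L,K}_{\mathcal{C}}\varphi$ (when $\Theta$ is empty, $K$ is empty). An empty antecedent: $\varnothing\Vdash^L_{\mathcal{B}}\varphi$ means $\Vdash^L_{\mathcal{B}}\varphi$. *)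

theory Defs
  imports Main "HOL-Library.Multiset"
begin

datatype 'a form =
    Atom 'a
  | Top
  | Zero
  | One
  | Lolli "'a form" "'a form"
  | Tensor "'a form" "'a form"
  | With "'a form" "'a form"
  | Plus "'a form" "'a form"
  | Bang "'a form"

type_synonym 'a aseq = "'a multiset \<times> 'a"          (* P \<Rightarrow> p *)
type_synonym 'a abox = "'a aseq multiset"
type_synonym 'a arule = "'a abox multiset \<times> 'a abox \<times> 'a"
type_synonym 'a base = "'a arule set"

definition persistent :: "'a base \<Rightarrow> 'a \<Rightarrow> bool" where
  "persistent B p \<longleftrightarrow> (\<exists>S. S \<noteq> {#} \<and> ({#}, S, p) \<in> B)"

text \<open>Derivability. The boxes T_1..T_m of A are listed as Ts (mset Ts = A),
  the multisets C_1..C_n as Cs, and the persistent atoms d_(m+1)..d_n as ds.\<close>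

inductive derives :: "'a base \<Rightarrow> 'a multiset \<Rightarrow> 'a \<Rightarrow> bool" for B where
  Ref: "derives B {#p#} p"
| App: "\<lbrakk> (A, S, p) \<in> B; mset Ts = A; m = length Ts; length Cs = n; m \<le> n;
          length ds = n - m;
          \<forall>i<m. \<forall>Q q. (Q, q) \<in># Ts ! i \<longrightarrow> derives B (Cs ! i + Q) q;
          \<forall>j<n - m. derives B (Cs ! (m + j)) (ds ! j) \<and> persistent B (ds ! j);
          \<forall>U v. (U, v) \<in># S \<longrightarrow> derives B (mset ds + U) v \<rbrakk>
        \<Longrightarrow> derives B (sum_list Cs) p"

fun isBang :: "'a form \<Rightarrow> bool" where
  "isBang (Bang _) = True"
| "isBang _ = False"

fun unBang :: "'a form \<Rightarrow> 'a form" where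
  "unBang (Bang d) = d"
| "unBang f = f"

lemma size_unBang: "size (unBang f) \<le> size f"
  by (cases f) auto

lemma size_unBang_lt1: "size (unBang f) < Suc (size f + n)"
  using size_unBang[of f] by simp

lemma size_unBang_lt2: "size (unBang f) < Suc (n + size f)"
  using size_unBang[of f] by simp

text \<open>Within the definition of support, an antecedent formula chi contributes
  (at base C with resource K): if chi = !delta, the requirement that delta be
  supported at C with empty resource (and K empty); otherwise support of chi at C
  with resource K.  This is exactly the clause for antecedents !Delta,Theta.\<close>

function supp :: "'a form \<Rightarrow> 'a base \<Rightarrow> 'a multiset \<Rightarrow> bool" where
  "supp (Atom p) B L = derives B L p"
| "supp (Lolli \<phi> \<psi>) B L =
     (\<forall>C K. B \<subseteq> C \<longrightarrow>
        (if isBang \<phi> then K = {#} \<and> supp (unBang \<phi>) C {#} else supp \<phi> C K) \<longrightarrow>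
        supp \<psi> C (L + K))"
| "supp (Tensor \<phi> \<psi>) B L =
     (\<forall>C K p. B \<subseteq> C \<longrightarrow>
        (\<forall>D K'. C \<subseteq> D \<longrightarrow>
            (\<exists>K1 K2. K' = K1 + K2 \<and>
               (if isBang \<phi> then K1 = {#} \<and> supp (unBang \<phi>) D {#} else supp \<phi> D K1) \<and>
               (if isBang \<psi> then K2 = {#} \<and> supp (unBang \<psi>) D {#} else supp \<psi> D K2)) \<longrightarrow>
            derives D (K + K') p) \<longrightarrow>
        derives C (L + K) p)"
| "supp One B L =
     (\<forall>C K p. B \<subseteq> C \<longrightarrow> derives C K p \<longrightarrow> derives C (L + K) p)"
| "supp (With \<phi> \<psi>) B L = (supp \<phi> B L \<and> supp \<psi> B L)"
| "supp (Plus \<phi> \<psi>) B L =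
     (\<forall>C K p. B \<subseteq> C \<longrightarrow>
        (\<forall>D K'. C \<subseteq> D \<longrightarrow>
            (if isBang \<phi> then K' = {#} \<and> supp (unBang \<phi>) D {#} else supp \<phi> D K') \<longrightarrow>
            derives D (K + K') p) \<longrightarrow>
        (\<forall>D K'. C \<subseteq> D \<longrightarrow>
            (if isBang \<psi> then K' = {#} \<and> supp (unBang \<psi>) D {#} else supp \<psi> D K') \<longrightarrow>
            derives D (K + K') p) \<longrightarrow>
        derives C (L + K) p)"
| "supp Zero B L = (\<forall>K p. derives B (L + K) p)"
| "supp Top B L = True"
| "supp (Bang \<phi>) B L =
     (\<forall>C K p. B \<subseteq> C \<longrightarrow>
        (\<forall>D. C \<subseteq> D \<longrightarrow> supp \<phi> D {#} \<longrightarrow> derives D K p) \<longrightarrow>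
        derives C (L + K) p)"
  by pat_completeness auto
termination
  by (relation "measure (\<lambda>(f, B, L). size f)")
     (auto simp: size_unBang_lt1 size_unBang_lt2)

inductive suppM :: "'a base \<Rightarrow> 'a multiset \<Rightarrow> 'a form multiset \<Rightarrow> bool" where
  empty: "suppM B {#} {#}"
| add: "supp \<phi> B K \<Longrightarrow> suppM B M \<Gamma> \<Longrightarrow> suppM B (K + M) (add_mset \<phi> \<Gamma>)"

definition cons :: "'a form multiset \<Rightarrow> 'a base \<Rightarrow> 'a multiset \<Rightarrow> 'a form \<Rightarrow> bool" where
  "cons \<Gamma> B L \<phi> =
     (if \<Gamma> = {#} then supp \<phi> B L
      else (\<forall>C K. B \<subseteq> C \<longrightarrow>
              (\<forall>\<delta>. Bang \<delta> \<in># \<Gamma> \<longrightarrow> supp \<delta> C {#}) \<longrightarrow>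
              suppM C K (filter_mset (\<lambda>\<chi>. \<not> isBang \<chi>) \<Gamma>) \<longrightarrow>
              supp \<phi> C (L + K)))"

end

theory Submission
  imports Defs
begin

text \<open>A supported \<open>!\<gamma>\<close> may be eliminated into atomic conclusions, trading its resource
  for the assumption that \<open>\<gamma>\<close> holds with empty resource in every extension of the base.
  By induction on formulae this elimination extends from atoms to an arbitrary conclusion:
  the atom and \<open>0\<close> clauses are the atomic case, \<open>&\<close> and \<open>\<multimap>\<close> follow from the induction
  hypothesis, and the remaining clauses (\<open>1\<close>, \<open>\<otimes>\<close>, \<open>\<oplus>\<close>, \<open>!\<close>) are themselves
  eliminations into atoms over all extensions, so they reduce to the atomic case directly.
  Discharging the formulae of \<open>!\<Gamma>\<close> one at a time then yields the cut.\<close>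

lemma persistent_mono: "persistent B d \<Longrightarrow> B \<subseteq> C \<Longrightarrow> persistent C d"
  unfolding persistent_def by blast

lemma derives_mono: "derives B L p \<Longrightarrow> B \<subseteq> C \<Longrightarrow> derives C L p"
proof (induction rule: derives.induct)
  case (Ref p)
  show ?case by (rule derives.Ref)
next
  case (App A S p Ts m Cs n ds)
  then show ?case
    by (intro derives.App[of A S p C Ts m Cs n ds]) (auto intro: persistent_mono)
qed

lemma supp_mono: "supp f B L \<Longrightarrow> B \<subseteq> C \<Longrightarrow> supp f C L"
proof (induction f arbitrary: B L C)
  case (Atom x)
  then show ?case by (auto intro: derives_mono)
next
  case Zero
  then show ?case by (auto intro: derives_mono)
qed (simp del: supp.simps(1); meson order_trans)+

definition elim_support :: "('a base \<Rightarrow> bool) \<Rightarrow> 'a base \<Rightarrow> 'a multiset \<Rightarrow> bool" where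
  "elim_support \<Phi> B L \<longleftrightarrow>
     (\<forall>C K p. B \<subseteq> C \<longrightarrow> (\<forall>D. C \<subseteq> D \<longrightarrow> \<Phi> D \<longrightarrow> derives D K p) \<longrightarrow> derives C (L + K) p)"

lemma supp_Bang_iff_elim_support: "supp (Bang g) B L \<longleftrightarrow> elim_support (\<lambda>D. supp g D {#}) B L"
  by (simp add: elim_support_def)

lemma elim_support_mono: "elim_support \<Phi> B L \<Longrightarrow> B \<subseteq> C \<Longrightarrow> elim_support \<Phi> C L"
  unfolding elim_support_def by (meson order_trans)

lemma elim_support_derives:
  assumes "elim_support \<Phi> B L" and "\<forall>C. B \<subseteq> C \<longrightarrow> \<Phi> C \<longrightarrow> derives C K p"
  shows "derives B (L + K) p"
  using assms unfolding elim_support_def by blast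

lemma elim_support_into_atomic_elim:
  assumes elim: "elim_support \<Phi> B L"
    and X_mono: "\<And>C D K' p. C \<subseteq> D \<Longrightarrow> X C K' p \<Longrightarrow> X D K' p"
    and elim_into: "\<forall>C. B \<subseteq> C \<longrightarrow> \<Phi> C \<longrightarrow>
                      (\<forall>D K' p. C \<subseteq> D \<longrightarrow> X D K' p \<longrightarrow> derives D (K + K') p)"
  shows "\<forall>C K' p. B \<subseteq> C \<longrightarrow> X C K' p \<longrightarrow> derives C (L + K + K') p"
proof (intro allI impI)
  fix C K' p
  assume "B \<subseteq> C" and "X C K' p"
  have "derives C (L + (K + K')) p"
  proof (rule elim_support_derives)
    show "elim_support \<Phi> C L" using elim \<open>B \<subseteq> C\<close> by (rule elim_support_mono)
    show "\<forall>D. C \<subseteq> D \<longrightarrow> \<Phi> D \<longrightarrow> derives D (K + K') p"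
      using elim_into \<open>B \<subseteq> C\<close> \<open>X C K' p\<close> X_mono by (meson order_trans order_refl)
  qed
  then show "derives C (L + K + K') p" by (simp add: add.assoc)
qed

lemma elim_support_supp:
  assumes "elim_support \<Phi> B L" and "\<forall>C. B \<subseteq> C \<longrightarrow> \<Phi> C \<longrightarrow> supp f C K"
  shows "supp f B (L + K)"
  using assms
proof (induction f arbitrary: B L K)
  case (Atom x)
  then show ?case by (simp add: elim_support_derives)
next
  case Zero
  show ?case
    unfolding supp.simps(7)
  proof (intro allI)
    fix K' p
    have "derives B (L + (K + K')) p"
      using Zero.prems by (intro elim_support_derives) auto
    then show "derives B (L + K + K') p" by (simp add: add.assoc)
  qed
next
  case (With f1 f2)
  then show ?case by simp
next
  case (Lolli f1 f2)
  show ?case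
    unfolding supp.simps(2)
  proof (intro allI impI)
    fix C K'
    assume "B \<subseteq> C"
      and arg: "if isBang f1 then K' = {#} \<and> supp (unBang f1) C {#} else supp f1 C K'"
    have "supp f2 C (L + (K + K'))"
    proof (rule Lolli.IH(2))
      show "elim_support \<Phi> C L" using Lolli.prems(1) \<open>B \<subseteq> C\<close> by (rule elim_support_mono)
      show "\<forall>D. C \<subseteq> D \<longrightarrow> \<Phi> D \<longrightarrow> supp f2 D (K + K')"
      proof (intro allI impI)
        fix D assume "C \<subseteq> D" and "\<Phi> D"
        then have "supp (Lolli f1 f2) D K"
          using Lolli.prems(2) \<open>B \<subseteq> C\<close> by (meson order_trans)
        moreover have "if isBang f1 then K' = {#} \<and> supp (unBang f1) D {#} else supp f1 D K'"
          using arg \<open>C \<subseteq> D\<close> supp_mono by (cases "isBang f1") auto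
        ultimately show "supp f2 D (K + K')"
          using \<open>C \<subseteq> D\<close> unfolding supp.simps(2)[of f1 f2] by blast
      qed
    qed
    then show "supp f2 C (L + K + K')" by (simp add: add.assoc)
  qed
next
  case One
  then show ?case
    by (simp only: supp.simps, intro elim_support_into_atomic_elim) (auto intro: derives_mono)
next
  case (Tensor f1 f2)
  then show ?case
    by (simp only: supp.simps, intro elim_support_into_atomic_elim) (auto dest: order_trans)
next
  case (Plus f1 f2)
  \<comment> \<open>the two premises of the \<open>\<oplus>\<close> clause are uncurried into one premise \<open>X\<close>\<close>
  then show ?case
    by (simp only: supp.simps,
        intro elim_support_into_atomic_elim[where X = "\<lambda>C K p. X\<^sub>1 C K p \<and> X\<^sub>2 C K p"
          for X\<^sub>1 X\<^sub>2, unfolded imp_conjL])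
       (auto dest: order_trans)
next
  case (Bang f)
  then show ?case
    by (simp only: supp.simps, intro elim_support_into_atomic_elim) (auto dest: order_trans)
qed simp

lemma supp_cut_Bangs:
  assumes "suppM B L \<Gamma>" and "\<forall>\<chi>\<in>#\<Gamma>. \<exists>\<gamma>. \<chi> = Bang \<gamma>"
    and "\<forall>C. B \<subseteq> C \<longrightarrow> (\<forall>\<delta>. Bang \<delta> \<in># \<Gamma> \<longrightarrow> supp \<delta> C {#}) \<longrightarrow> supp f C K"
  shows "supp f B (L + K)"
  using assms
proof (induction arbitrary: K rule: suppM.induct)
  case (empty B)
  then show ?case by simp
next
  case (add \<chi> B K\<^sub>\<chi> M \<Gamma>)
  obtain \<gamma> where \<chi>: "\<chi> = Bang \<gamma>" using add.prems(1) by auto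
  have "supp f B (M + (K\<^sub>\<chi> + K))"
  proof (rule add.IH)
    show "\<forall>\<chi>\<in>#\<Gamma>. \<exists>\<gamma>. \<chi> = Bang \<gamma>" using add.prems(1) by auto
    show "\<forall>C. B \<subseteq> C \<longrightarrow> (\<forall>\<delta>. Bang \<delta> \<in># \<Gamma> \<longrightarrow> supp \<delta> C {#}) \<longrightarrow> supp f C (K\<^sub>\<chi> + K)"
    proof (intro allI impI)
      fix C assume "B \<subseteq> C" and \<Gamma>_supp: "\<forall>\<delta>. Bang \<delta> \<in># \<Gamma> \<longrightarrow> supp \<delta> C {#}"
      show "supp f C (K\<^sub>\<chi> + K)"
      proof (rule elim_support_supp)
        have "supp (Bang \<gamma>) C K\<^sub>\<chi>" using supp_mono add.hyps(1) \<chi> \<open>B \<subseteq> C\<close> by blast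
        then show "elim_support (\<lambda>D. supp \<gamma> D {#}) C K\<^sub>\<chi>"
          unfolding supp_Bang_iff_elim_support .
        show "\<forall>D. C \<subseteq> D \<longrightarrow> supp \<gamma> D {#} \<longrightarrow> supp f D K"
        proof (intro allI impI)
          fix D assume "C \<subseteq> D" and "supp \<gamma> D {#}"
          then have "\<forall>\<delta>. Bang \<delta> \<in># add_mset \<chi> \<Gamma> \<longrightarrow> supp \<delta> D {#}"
            using \<Gamma>_supp \<chi> by (auto intro: supp_mono)
          then show "supp f D K"
            using add.prems(2) \<open>B \<subseteq> C\<close> \<open>C \<subseteq> D\<close> by (meson order_trans)
        qed
      qed
    qed
  qed
  then show ?case by (simp add: ac_simps)
qed

lemma cons_Bangs_iff:
  assumes "\<Gamma> \<noteq> {#}" and "\<forall>\<chi>\<in>#\<Gamma>. \<exists>\<gamma>. \<chi> = Bang \<gamma>"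
  shows "cons \<Gamma> B K \<psi> \<longleftrightarrow>
           (\<forall>C. B \<subseteq> C \<longrightarrow> (\<forall>\<delta>. Bang \<delta> \<in># \<Gamma> \<longrightarrow> supp \<delta> C {#}) \<longrightarrow> supp \<psi> C K)"
proof -
  have no_linear: "filter_mset (\<lambda>\<chi>. \<not> isBang \<chi>) \<Gamma> = {#}"
    using assms(2) by (auto simp: filter_mset_eq_mempty_iff)
  have "suppM C K' {#} \<longleftrightarrow> K' = {#}" for C :: "'a base" and K'
    by (auto elim: suppM.cases intro: suppM.empty)
  then show ?thesis
    using assms(1) unfolding cons_def no_linear by auto
qed

theorem corollary3:
  fixes \<Gamma> :: "'a form multiset" and \<psi> :: "'a form"
    and B :: "'a base" and L K :: "'a multiset"
  assumes "\<Gamma> \<noteq> {#}"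
    and "\<forall>\<chi>\<in>#\<Gamma>. \<exists>\<gamma>. \<chi> = Bang \<gamma>"
    and "suppM B L \<Gamma>"
    and "cons \<Gamma> B K \<psi>"
  shows "supp \<psi> B (L + K)"
  using assms(3,2) assms(4)[unfolded cons_Bangs_iff[OF assms(1,2)]] by (rule supp_cut_Bangs)

end
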